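(* Let $G=(V,E)$ be a finite graph, $x_e>0$ for $e\in E$, $\Omega=\{0,1\}^E$ and $\Sigma\subset\Omega$. Suppose that $\Sigma$ contains two elements $\eta'\subset\eta$ with $\prod_{e\in\eta'}x_e<\prod_{e\in\eta}x_e$. Then there exists no probability measure $\mathscr{P}$ on $\Omega\times\Sigma$ whose marginal on $\Sigma$ satisfies $\mathscr{P}_\Sigma[\eta]\propto\prod_{e\in\eta}x_e$ and such that, for every $\omega$ with $\mathscr{P}_\Omega[\omega]\neq0$, the conditional measure $\mathscr{P}[\cdot\mid\omega]$ is the uniform measure on $\Sigma^\downarrow(\omega):=\{\eta\in\Sigma\mid\eta\subset\omega\}$.
   Context: Elements of $\{0,1\}^E$ are identified with subsets of $E$; $\mathscr{P}_\Omega$ denotes the marginal on $\Omega$. *)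

theory Defs
  imports "HOL-Probability.Probability"
begin

definition down_set :: "'e set set \<Rightarrow> 'e set \<Rightarrow> 'e set set" where
  "down_set S \<omega> = {\<eta> \<in> S. \<eta> \<subseteq> \<omega>}"

end

theory Submission
  imports Defs
begin

text \<open>
  Fix a configuration \<omega> of positive probability. Since the conditional law of the second
  coordinate given \<omega> is uniform on the down-set D(\<omega>) = {\<zeta> \<in> \<Sigma>. \<zeta> \<subseteq> \<omega>}, the joint
  weight P(\<omega>, \<zeta>) equals P(first = \<omega>) / |D(\<omega>)| for every \<zeta> \<in> D(\<omega>) and vanishes
  otherwise. As \<eta> \<in> D(\<omega>) forces \<eta>' \<in> D(\<omega>), this gives P(\<omega>, \<eta>) \<le> P(\<omega>, \<eta>') for every
  \<omega>, and summing over \<omega> bounds the \<Sigma>-marginal of \<eta> by that of \<eta>'. The proportionality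
  constant of the marginal is positive, so this contradicts the strict inequality between
  the weights of \<eta>' and \<eta>.
\<close>

lemma pmf_map_snd_eq_sum:
  fixes M :: "('a \<times> 'b) pmf"
  assumes "finite W" and "fst ` set_pmf M \<subseteq> W"
  shows "pmf (map_pmf snd M) y = (\<Sum>w\<in>W. pmf M (w, y))"
proof -
  have "pmf (map_pmf snd M) y = measure M (snd -` {y})"
    by (rule pmf_map)
  also have "\<dots> = measure M ((\<lambda>w. (w, y)) ` W)"
    using assms(2) by (intro measure_prob_cong_0) (force simp: set_pmf_eq)+
  also have "\<dots> = (\<Sum>w\<in>W. pmf M (w, y))"
    using assms(1) by (simp add: measure_measure_pmf_finite sum.reindex inj_on_def)
  finally show ?thesis .
qed

lemma pmf_map_snd_cond_fst:
  fixes P :: "('a \<times> 'b) pmf"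
  assumes "w \<in> set_pmf (map_pmf fst P)"
  shows "pmf (map_pmf snd (cond_pmf P {z. fst z = w})) y = pmf P (w, y) / pmf (map_pmf fst P) w"
proof -
  have ne: "set_pmf P \<inter> {z. fst z = w} \<noteq> {}"
    using assms by auto
  have "pmf (map_pmf snd (cond_pmf P {z. fst z = w})) y = pmf (cond_pmf P {z. fst z = w}) (w, y)"
    using pmf_map_snd_eq_sum[of "{w}" "cond_pmf P {z. fst z = w}"] set_cond_pmf[OF ne] by auto
  also have "\<dots> = pmf P (w, y) / measure P {z. fst z = w}"
    by (simp add: pmf_cond[OF ne])
  also have "measure P {z. fst z = w} = pmf (map_pmf fst P) w"
    by (simp add: pmf_map vimage_def)
  finally show ?thesis .
qed

lemma pmf_eq_if_cond_fst_uniform: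
  fixes P :: "('a \<times> 'b) pmf"
  assumes "w \<in> set_pmf (map_pmf fst P)"
    and "map_pmf snd (cond_pmf P {z. fst z = w}) = pmf_of_set D"
    and "finite D" and "y \<in> D"
  shows "pmf P (w, y) = pmf (map_pmf fst P) w / card D"
proof -
  have "D \<noteq> {}"
    using assms(4) by auto
  then have "pmf P (w, y) / pmf (map_pmf fst P) w = 1 / card D"
    using pmf_map_snd_cond_fst[OF assms(1), of y] assms(2-4) by simp
  moreover have "pmf (map_pmf fst P) w > 0"
    using assms(1) by (rule pmf_positive)
  ultimately show ?thesis
    by (simp add: field_simps)
qed

definition cond_snd_uniform_on_down_sets :: "'e set set \<Rightarrow> ('e set \<times> 'e set) pmf \<Rightarrow> bool" where
  "cond_snd_uniform_on_down_sets S P \<longleftrightarrow>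
    (\<forall>\<omega>. pmf (map_pmf fst P) \<omega> \<noteq> 0 \<longrightarrow>
       down_set S \<omega> \<noteq> {} \<and>
       map_pmf snd (cond_pmf P {z. fst z = \<omega>}) = pmf_of_set (down_set S \<omega>))"

lemma pmf_le_if_cond_uniform_down_set:
  fixes P :: "('e set \<times> 'e set) pmf"
  assumes "finite w"
    and cond: "cond_snd_uniform_on_down_sets S P"
    and "\<eta>' \<in> S" and "\<eta>' \<subseteq> \<eta>"
  shows "pmf P (w, \<eta>) \<le> pmf P (w, \<eta>')"
proof (cases "(w, \<eta>) \<in> set_pmf P")
  case False
  then show ?thesis
    by (simp add: set_pmf_eq)
next
  case True
  then have w: "w \<in> set_pmf (map_pmf fst P)"
    by force
  then have ne: "down_set S w \<noteq> {}"
    and unif: "map_pmf snd (cond_pmf P {z. fst z = w}) = pmf_of_set (down_set S w)"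
    using cond by (auto simp: cond_snd_uniform_on_down_sets_def set_pmf_eq)
  have fin: "finite (down_set S w)"
    using \<open>finite w\<close> by (auto simp: down_set_def intro: finite_subset[of _ "Pow w"])
  have "\<eta> \<in> set_pmf (map_pmf snd (cond_pmf P {z. fst z = w}))"
    using True by (subst set_map_pmf, subst set_cond_pmf) force+
  then have "\<eta> \<in> down_set S w"
    using unif fin ne by simp
  moreover have "\<eta>' \<in> down_set S w"
    using calculation assms(3,4) by (auto simp: down_set_def)
  ultimately show ?thesis
    using pmf_eq_if_cond_fst_uniform[OF w unif fin] by simp
qed

lemma pmf_map_snd_le_if_cond_uniform_down_set:
  fixes P :: "('e set \<times> 'e set) pmf"
  assumes "finite E" and supp: "fst ` set_pmf P \<subseteq> Pow E"
    and "cond_snd_uniform_on_down_sets S P"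
    and "\<eta>' \<in> S" and "\<eta>' \<subseteq> \<eta>"
  shows "pmf (map_pmf snd P) \<eta> \<le> pmf (map_pmf snd P) \<eta>'"
proof -
  have "pmf P (w, \<eta>) \<le> pmf P (w, \<eta>')" if "w \<in> Pow E" for w
    using that assms(1) pmf_le_if_cond_uniform_down_set[OF _ assms(3-5)]
    by (meson PowD finite_subset)
  then show ?thesis
    unfolding pmf_map_snd_eq_sum[OF finite_Pow_iff[THEN iffD2, OF assms(1)] supp]
    by (rule sum_mono)
qed

theorem lemma3p4:
  fixes E :: "'e set" and x :: "'e \<Rightarrow> real" and S :: "'e set set"
    and \<eta>' \<eta> :: "'e set"
  assumes "finite E"
    and "\<forall>e\<in>E. x e > 0"
    and "S \<subseteq> Pow E"
    and "\<eta>' \<in> S" and "\<eta> \<in> S" and "\<eta>' \<subseteq> \<eta>"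
    and "(\<Prod>e\<in>\<eta>'. x e) < (\<Prod>e\<in>\<eta>. x e)"
  shows "\<not> (\<exists>P :: ('e set \<times> 'e set) pmf.
            set_pmf P \<subseteq> Pow E \<times> S
          \<and> (\<exists>c. \<forall>\<zeta>\<in>S. pmf (map_pmf snd P) \<zeta> = c * (\<Prod>e\<in>\<zeta>. x e))
          \<and> (\<forall>\<omega>. pmf (map_pmf fst P) \<omega> \<noteq> 0 \<longrightarrow>
                 down_set S \<omega> \<noteq> {} \<and>
                 map_pmf snd (cond_pmf P {z. fst z = \<omega>}) = pmf_of_set (down_set S \<omega>)))"
proof (intro notI, elim exE conjE)
  fix P :: "('e set \<times> 'e set) pmf" and c
  assume supp: "set_pmf P \<subseteq> Pow E \<times> S"
    and marginal: "\<forall>\<zeta>\<in>S. pmf (map_pmf snd P) \<zeta> = c * (\<Prod>e\<in>\<zeta>. x e)"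
    and cond: "\<forall>\<omega>. pmf (map_pmf fst P) \<omega> \<noteq> 0 \<longrightarrow>
                 down_set S \<omega> \<noteq> {} \<and>
                 map_pmf snd (cond_pmf P {z. fst z = \<omega>}) = pmf_of_set (down_set S \<omega>)"
  have "fst ` set_pmf P \<subseteq> Pow E"
    using supp by force
  then have "c * (\<Prod>e\<in>\<eta>. x e) \<le> c * (\<Prod>e\<in>\<eta>'. x e)"
    using pmf_map_snd_le_if_cond_uniform_down_set
        [OF assms(1) _ cond[folded cond_snd_uniform_on_down_sets_def] assms(4,6)]
      marginal assms(4,5) by simp
  moreover have "c > 0"
  proof -
    obtain \<zeta> where \<zeta>: "\<zeta> \<in> set_pmf (map_pmf snd P)"
      using set_pmf_not_empty[of "map_pmf snd P"] by blast
    then have "\<zeta> \<in> S"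
      using supp by auto
    then have "(\<Prod>e\<in>\<zeta>. x e) > 0"
      using assms(2,3) by (intro prod_pos) auto
    moreover have "pmf (map_pmf snd P) \<zeta> > 0"
      using \<zeta> by (rule pmf_positive)
    ultimately show ?thesis
      using marginal \<open>\<zeta> \<in> S\<close> by (simp add: zero_less_mult_iff)
  qed
  ultimately show False
    using assms(7) by simp
qed

end
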